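(* Assume the standing assumptions. Let $\bar u$ be a local solution of (P) with radius $\rho>0$, let $\epsilon_k>0$ with $\epsilon_k\to0$, and let $u_k$ be a global solution of the auxiliary problem $\min\{\Phi_{\epsilon_k}(u)+\frac12\|u-\bar u\|_{L^2(\Omega)}^2:\ u\in V,\ \|u-\bar u\|_V\le\rho\}$. Define $\lambda_k\in V^*$ by $\langle\lambda_k,v\rangle_{V^*,V}:=G_{\epsilon_k}'(u_k)v=\int_\Omega 2u_k\,\psi_{\epsilon_k}'(u_k^2)\,v\,dx$. Then $\lambda_k\to\bar\lambda$ in $V^*$, where $\bar\lambda\in V^*$ is defined by \[ \beta\langle\bar\lambda,v\rangle_{V^*,V}=-F'(\bar u)v-\alpha\langle\bar u,v\rangle_V\qquad\forall v\in V. \]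
   Context: Standing assumptions: $\Omega\subset\mathbb R^d$ bounded Lipschitz domain; $V$ real Hilbert space with inner product $\langle\cdot,\cdot\rangle_V$, $V\subset L^2(\Omega)$ with compact and dense embedding; $V^*$ dual with pairing $\langle\cdot,\cdot\rangle_{V^*,V}$. $F:V\to\mathbb R$ weakly lower semicontinuous, bounded below by an affine function, continuously Fréchet differentiable. $\alpha>0$, $\beta>0$, $p\in(0,1)$. For $\epsilon>0$, $\psi_\epsilon(t)=\frac p2\frac{t}{\epsilon^{2-p}}+(1-\frac p2)\epsilon^p$ if $t\in[0,\epsilon^2)$ and $\psi_\epsilon(t)=t^{p/2}$ if $t\ge\epsilon^2$, with $\psi_\epsilon'(t)=\frac p2\min(\epsilon^{p-2},t^{(p-2)/2})$; $\psi_0(t)=t^{p/2}$. $G_\epsilon(u):=\int_\Omega\psi_\epsilon(|u|^2)\,dx$, $\Phi_\epsilon(u):=F(u)+\frac\alpha2\|u\|_V^2+\beta G_\epsilon(u)$ for $\epsilon\ge0$. (P) is $\min_{u\in V}\Phi_0(u)$; $\bar u$ is a local solution with radius $\rho$ if $\Phi_0(\bar u)\le\Phi_0(u)$ whenever $\|u-\bar u\|_V\le\rho$. *)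

theory Defs
  imports "HOL-Analysis.Analysis"
begin

text \<open>Strong Lipschitz boundary: near every boundary point the domain is, after a
 rigid choice of a unit direction e, the subgraph of a Lipschitz function of the
 component orthogonal to e.\<close>

definition lipschitz_domain :: "'a::euclidean_space set \<Rightarrow> bool" where
  "lipschitz_domain \<Omega> \<longleftrightarrow> open \<Omega> \<and> connected \<Omega> \<and> \<Omega> \<noteq> {} \<and> bounded \<Omega> \<and>
     (\<forall>x \<in> frontier \<Omega>. \<exists>r>0. \<exists>e::'a. \<exists>g::'a \<Rightarrow> real. \<exists>L.
        norm e = 1 \<and> L-lipschitz_on {y. y \<bullet> e = 0} g \<and>
        \<Omega> \<inter> ball x r = {y \<in> ball x r. y \<bullet> e < g (y - (y \<bullet> e) *\<^sub>R e)})"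

definition L2 :: "'a::euclidean_space set \<Rightarrow> ('a \<Rightarrow> real) \<Rightarrow> bool" where
  "L2 \<Omega> f \<longleftrightarrow> f \<in> borel_measurable (lebesgue_on \<Omega>) \<and>
                integrable (lebesgue_on \<Omega>) (\<lambda>x. (f x)\<^sup>2)"

definition L2_norm :: "'a::euclidean_space set \<Rightarrow> ('a \<Rightarrow> real) \<Rightarrow> real" where
  "L2_norm \<Omega> f = sqrt (integral\<^sup>L (lebesgue_on \<Omega>) (\<lambda>x. (f x)\<^sup>2))"

text \<open>V is a real Hilbert space (type class), identified with a subspace of L^2(Omega)
 via the linear map emb; the embedding is continuous, injective (modulo null sets),
 compact and dense.\<close>

definition compact_dense_embedding ::
  "'a::euclidean_space set \<Rightarrow> ('v::{real_inner,complete_space} \<Rightarrow> 'a \<Rightarrow> real) \<Rightarrow> bool" where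
  "compact_dense_embedding \<Omega> emb \<longleftrightarrow>
     (\<forall>v. L2 \<Omega> (emb v)) \<and>
     (\<forall>a b u v. emb (a *\<^sub>R u + b *\<^sub>R v) = (\<lambda>x. a * emb u x + b * emb v x)) \<and>
     (\<exists>C. \<forall>v. L2_norm \<Omega> (emb v) \<le> C * norm v) \<and>
     (\<forall>v. (AE x in lebesgue_on \<Omega>. emb v x = 0) \<longrightarrow> v = 0) \<and>
     (\<forall>w::nat \<Rightarrow> 'v. bounded (range w) \<longrightarrow>
        (\<exists>r f. strict_mono r \<and> L2 \<Omega> f \<and>
           (\<lambda>n. L2_norm \<Omega> (\<lambda>x. emb (w (r n)) x - f x)) \<longlonglongrightarrow> 0)) \<and>
     (\<forall>f. L2 \<Omega> f \<longrightarrow> (\<forall>e>0. \<exists>v. L2_norm \<Omega> (\<lambda>x. emb v x - f x) < e))"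

definition weakly_lsc :: "('v::real_inner \<Rightarrow> real) \<Rightarrow> bool" where
  "weakly_lsc F \<longleftrightarrow>
     (\<forall>w u. (\<forall>z. (\<lambda>n. inner (w n) z) \<longlonglongrightarrow> inner u z) \<longrightarrow>
            ereal (F u) \<le> liminf (\<lambda>n. ereal (F (w n))))"

definition bounded_below_affine :: "('v::real_normed_vector \<Rightarrow> real) \<Rightarrow> bool" where
  "bounded_below_affine F \<longleftrightarrow> (\<exists>(l::'v \<Rightarrow>\<^sub>L real) c. \<forall>u. blinfun_apply l u + c \<le> F u)"

definition C1_frechet :: "('v::real_normed_vector \<Rightarrow> real) \<Rightarrow> ('v \<Rightarrow> ('v \<Rightarrow>\<^sub>L real)) \<Rightarrow> bool" where
  "C1_frechet F DF \<longleftrightarrow> (\<forall>u. (F has_derivative blinfun_apply (DF u)) (at u)) \<and> continuous_on UNIV DF"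

definition psi :: "real \<Rightarrow> real \<Rightarrow> real \<Rightarrow> real" where
  "psi p \<epsilon> t = (if t < \<epsilon>\<^sup>2 then p / 2 * t / \<epsilon> powr (2 - p) + (1 - p / 2) * \<epsilon> powr p
                 else t powr (p / 2))"

text \<open>Derivative of psi: p/2 * min(eps^(p-2), t^((p-2)/2)) (value eps^(p-2) at t = 0 for eps > 0).\<close>
definition psi' :: "real \<Rightarrow> real \<Rightarrow> real \<Rightarrow> real" where
  "psi' p \<epsilon> t = (if t < \<epsilon>\<^sup>2 then p / 2 * \<epsilon> powr (p - 2) else p / 2 * t powr ((p - 2) / 2))"

definition G :: "'a::euclidean_space set \<Rightarrow> ('v \<Rightarrow> 'a \<Rightarrow> real) \<Rightarrow> real \<Rightarrow> real \<Rightarrow> 'v \<Rightarrow> real" where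
  "G \<Omega> emb p \<epsilon> u = integral\<^sup>L (lebesgue_on \<Omega>) (\<lambda>x. psi p \<epsilon> ((emb u x)\<^sup>2))"

definition Phi ::
  "'a::euclidean_space set \<Rightarrow> ('v::real_inner \<Rightarrow> 'a \<Rightarrow> real) \<Rightarrow> ('v \<Rightarrow> real) \<Rightarrow> real \<Rightarrow> real \<Rightarrow> real
     \<Rightarrow> real \<Rightarrow> 'v \<Rightarrow> real" where
  "Phi \<Omega> emb F \<alpha> \<beta> p \<epsilon> u = F u + \<alpha> / 2 * (norm u)\<^sup>2 + \<beta> * G \<Omega> emb p \<epsilon> u"

end

(*
  The smoothed penalty psi p eps t lies between t powr (p/2) and t powr (p/2) + (1 - p/2) eps powr p.
  Comparing u k with ubar in the auxiliary problem, and ubar with u k in (P), therefore gives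
  ||u k - ubar||^2 in L^2 <= 2 beta (1 - p/2) (eps k) powr p |Omega|, which tends to 0.
  Bounded in V and null in L^2, the differences u k - ubar tend to 0 weakly in V because the
  embedding is injective; weak lower semicontinuity of F and the same comparison then give
  limsup ||u k|| <= ||ubar||, so u k -> ubar strongly.  Eventually u k lies inside the ball, where
  the first-order condition F'(u k) + alpha <u k, .> + beta lambda k + (u k - ubar, .)_{L^2} = 0
  holds, and continuity of F' turns it into lambda k -> lambda-bar in the dual of V.
*)

theory Submission
  imports Defs
begin

lemma power2_powr:
  fixes e q :: real
  assumes "0 < e"
  shows "(e\<^sup>2) powr q = e powr (2 * q)"
proof -
  have "e\<^sup>2 = e powr 2" using assms by (simp add: powr_realpow)
  then show ?thesis by (simp only: powr_powr)
qed

lemma powr_le_tangent: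
  fixes p \<eta> t :: real
  assumes p: "0 < p" "p < 1" and \<eta>: "0 < \<eta>" and t: "0 \<le> t"
  shows "t powr (p/2) \<le> p/2 * t / \<eta> powr (2 - p) + (1 - p/2) * \<eta> powr p"
proof (cases "t = 0")
  case True
  then show ?thesis using p \<eta> by simp
next
  case False
  then have tp: "t > 0" using t by simp
  define a where "a = t / \<eta> powr (2 - p)"
  define b where "b = \<eta> powr p"
  have "a powr (p/2) * b powr (1 - p/2) \<le> p/2 * a + (1 - p/2) * b"
    by (rule Youngs_inequality_0) (use p \<eta> tp in \<open>auto simp: a_def b_def\<close>)
  moreover have "a powr (p/2) * b powr (1 - p/2) = t powr (p/2)"
  proof -
    have "b powr (1 - p/2) = \<eta> powr (p * (1 - p/2))"
      unfolding b_def by (simp add: powr_powr)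
    moreover have "p * (1 - p/2) = (2 - p) * (p/2)" by (simp add: field_simps)
    moreover have "a powr (p/2) = t powr (p/2) / \<eta> powr ((2 - p) * (p/2))"
      unfolding a_def using \<eta> tp by (simp add: powr_divide powr_powr)
    ultimately show ?thesis using \<eta> by simp
  qed
  ultimately show ?thesis by (simp add: a_def b_def)
qed

text \<open>The affine branch of \<open>psi p \<epsilon>\<close> is the tangent of the concave \<open>t powr (p/2)\<close> at \<open>t = \<epsilon>\<^sup>2\<close>.\<close>

lemma powr_le_psi:
  assumes "0 < p" "p < 1" "0 < \<epsilon>" "0 \<le> t"
  shows "t powr (p/2) \<le> psi p \<epsilon> t"
  using powr_le_tangent[OF assms] by (simp add: psi_def)

lemma psi_le_powr_add:
  assumes p: "0 < p" "p < 1" and \<epsilon>: "0 < \<epsilon>" and t: "0 \<le> t"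
  shows "psi p \<epsilon> t \<le> t powr (p/2) + (1 - p/2) * \<epsilon> powr p"
proof (cases "0 < t \<and> t < \<epsilon>\<^sup>2")
  case False
  then show ?thesis using p \<epsilon> t by (auto simp: psi_def)
next
  case True
  then have tp: "t > 0" and small: "t < \<epsilon>\<^sup>2" by auto
  have "(\<epsilon>\<^sup>2) powr (1 - p/2) = \<epsilon> powr (2 * (1 - p/2))"
    using \<epsilon> by (rule power2_powr)
  then have "(t / \<epsilon>\<^sup>2) powr (1 - p/2) = t powr (1 - p/2) / \<epsilon> powr (2 * (1 - p/2))"
    using \<epsilon> tp by (simp add: powr_divide)
  moreover have "t powr (p/2) * t powr (1 - p/2) = t"
    using tp by (simp add: powr_add[symmetric])
  ultimately have "t / \<epsilon> powr (2 - p) = t powr (p/2) * (t / \<epsilon>\<^sup>2) powr (1 - p/2)"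
    by (simp add: algebra_simps)
  moreover have "(t / \<epsilon>\<^sup>2) powr (1 - p/2) \<le> 1"
    using small tp \<epsilon> p by (intro powr_le1) auto
  ultimately have "t / \<epsilon> powr (2 - p) \<le> t powr (p/2)"
    by (metis mult_left_le powr_ge_zero)
  moreover have "p/2 * (t / \<epsilon> powr (2 - p)) \<le> t / \<epsilon> powr (2 - p)"
    using p tp \<epsilon> by (intro mult_left_le_one_le) auto
  ultimately show ?thesis using small by (simp add: psi_def)
qed

lemma psi_zero: "0 \<le> t \<Longrightarrow> psi p 0 t = t powr (p/2)"
  by (simp add: psi_def)

lemma psi_borel [measurable]: "psi p \<epsilon> \<in> borel_measurable borel"
  unfolding psi_def by measurable

lemma psi'_borel [measurable]: "psi' p \<epsilon> \<in> borel_measurable borel"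
  unfolding psi'_def by measurable

lemma has_derivative_at_within_of_real_derivative:
  assumes "(f has_real_derivative D) (at x)"
  shows "(f has_derivative (\<lambda>h. h * D)) (at x within S)"
proof -
  have "(\<lambda>h. h * D) = (*) D" by (rule ext) simp
  then show ?thesis
    using assms by (simp add: has_field_derivative_def has_derivative_at_withinI)
qed

lemma psi_has_real_derivative:
  assumes \<epsilon>: "0 < \<epsilon>"
  shows "(psi p \<epsilon> has_real_derivative psi' p \<epsilon> t) (at t)"
proof -
  define S where "S = {..<\<epsilon>\<^sup>2}"
  define T where "T = {\<epsilon>\<^sup>2..}"
  define a where "a = p/2 / \<epsilon> powr (2 - p)"
  define L where "L t = t * a + (1 - p/2) * \<epsilon> powr p" for t :: real
  define g where "g t = t powr (p/2)" for t :: real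
  define g' where "g' t = p/2 * t powr (p/2 - 1)" for t :: real
  have cl: "closure S \<inter> closure T = {\<epsilon>\<^sup>2}" by (auto simp: S_def T_def)
  have ST: "S \<union> T = UNIV" by (auto simp: S_def T_def)
  have "\<epsilon> powr (p - 2) = 1 / \<epsilon> powr (2 - p)"
    using \<epsilon> by (simp add: powr_minus_divide[symmetric])
  then have a: "a = p/2 * \<epsilon> powr (p - 2)" by (simp add: a_def)
  have \<epsilon>2: "(\<epsilon>\<^sup>2) powr q = \<epsilon> powr (2 * q)" for q
    using \<epsilon> by (rule power2_powr)
  have "\<epsilon> powr (2 - p) = \<epsilon>\<^sup>2 / \<epsilon> powr p"
    using \<epsilon> by (simp add: powr_diff powr_realpow)
  then have L_g: "L (\<epsilon>\<^sup>2) = g (\<epsilon>\<^sup>2)"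
    using \<epsilon> \<epsilon>2[of "p/2"] by (simp add: L_def a_def g_def algebra_simps)
  have a_g': "a = g' (\<epsilon>\<^sup>2)"
    using \<epsilon>2[of "p/2 - 1"] by (simp add: a g'_def algebra_simps)
  have L': "(L has_real_derivative a) (at t)"
    unfolding L_def by (auto intro!: derivative_eq_intros)
  have g': "(g has_real_derivative g' t) (at t)" if "t \<ge> \<epsilon>\<^sup>2"
    unfolding g_def g'_def using that \<epsilon>
    by (intro has_real_derivative_powr) (auto intro: less_le_trans[of 0 "\<epsilon>\<^sup>2"])
  have "((\<lambda>t. if t \<in> S then L t else g t) has_derivative
      (if t \<in> S then (\<lambda>h. h * a) else (\<lambda>h. h * g' t))) (at t within S \<union> T)"
  proof (rule has_derivative_If_within_closures[where f'="\<lambda>_ h. h * a" and g'="\<lambda>x h. h * g' x"])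
    show "(L has_derivative (\<lambda>h. h * a)) (at t within S \<union> (closure S \<inter> closure T))"
      using L' by (rule has_derivative_at_within_of_real_derivative)
    show "(g has_derivative (\<lambda>h. h * g' t)) (at t within T \<union> (closure S \<inter> closure T))"
      if "t \<in> T \<union> (closure S \<inter> closure T)"
      using that cl by (intro has_derivative_at_within_of_real_derivative g') (auto simp: T_def)
    assume "t \<in> closure S" "t \<in> closure T"
    then have "t = \<epsilon>\<^sup>2" using cl by blast
    then show "L t = g t" and "(\<lambda>h. h * a) = (\<lambda>h. h * g' t)"
      using L_g a_g' by simp_all
  qed (simp add: ST)
  moreover have "(\<lambda>t. if t \<in> S then L t else g t) = psi p \<epsilon>"
    by (auto simp: psi_def S_def L_def a_def g_def)
  moreover have "(if t \<in> S then (\<lambda>h. h * a) else (\<lambda>h. h * g' t)) = (*) (psi' p \<epsilon> t)"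
    by (auto simp: S_def psi'_def a g'_def diff_divide_distrib)
  ultimately show ?thesis by (simp add: ST has_field_derivative_def)
qed

lemma psi_sq_has_real_derivative:
  assumes "0 < \<epsilon>"
  shows "((\<lambda>s. psi p \<epsilon> (s\<^sup>2)) has_real_derivative 2 * s * psi' p \<epsilon> (s\<^sup>2)) (at s)"
proof -
  have "((\<lambda>s. psi p \<epsilon> (s\<^sup>2)) has_real_derivative psi' p \<epsilon> (s\<^sup>2) * (2 * s)) (at s)"
    by (rule DERIV_chain2[OF psi_has_real_derivative[OF assms]]) (auto intro!: derivative_eq_intros)
  then show ?thesis by (simp add: mult_ac)
qed

lemma sq_powr_half: "((s::real)\<^sup>2) powr (p/2) = \<bar>s\<bar> powr p"
  using power2_powr[of "\<bar>s\<bar>" "p/2"] by (cases "s = 0") simp_all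

lemma psi_sq_line_has_real_derivative:
  assumes "0 < \<epsilon>"
  shows "((\<lambda>t. psi p \<epsilon> ((a + t * b)\<^sup>2)) has_real_derivative 2 * a * psi' p \<epsilon> (a\<^sup>2) * b) (at 0)"
proof -
  have "((\<lambda>t. a + t * b) has_real_derivative b) (at 0)"
    by (auto intro!: derivative_eq_intros)
  from DERIV_chain2[OF psi_sq_has_real_derivative[OF assms] this] show ?thesis by simp
qed

lemma abs_psi_sq_derivative_le:
  assumes p: "0 < p" "p < 1" and \<epsilon>: "0 < \<epsilon>"
  shows "\<bar>2 * s * psi' p \<epsilon> (s\<^sup>2)\<bar> \<le> p * \<epsilon> powr (p - 1)"
proof (cases "\<bar>s\<bar> < \<epsilon>")
  case True
  then have "s\<^sup>2 < \<epsilon>\<^sup>2" by (metis abs_ge_zero power2_abs power_strict_mono zero_less_numeral)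
  then have "\<bar>2 * s * psi' p \<epsilon> (s\<^sup>2)\<bar> = p * (\<bar>s\<bar> * \<epsilon> powr (p - 2))"
    using p by (simp add: psi'_def abs_mult)
  also have "\<dots> \<le> p * (\<epsilon> * \<epsilon> powr (p - 2))"
    using True p by (intro mult_right_mono mult_left_mono) auto
  also have "\<epsilon> * \<epsilon> powr (p - 2) = \<epsilon> powr (p - 1)"
    using \<epsilon> powr_mult_base[of \<epsilon> "p - 2"] by simp
  finally show ?thesis .
next
  case False
  then have s: "\<epsilon> \<le> \<bar>s\<bar>" "0 < \<bar>s\<bar>" using \<epsilon> by auto
  then have "\<not> s\<^sup>2 < \<epsilon>\<^sup>2"
    using power_mono[of \<epsilon> "\<bar>s\<bar>" 2] \<epsilon> by simp
  moreover have "(s\<^sup>2) powr ((p - 2) / 2) = \<bar>s\<bar> powr (p - 2)"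
    using sq_powr_half[of s "p - 2"] by simp
  ultimately have "\<bar>2 * s * psi' p \<epsilon> (s\<^sup>2)\<bar> = p * (\<bar>s\<bar> * \<bar>s\<bar> powr (p - 2))"
    using p by (simp add: psi'_def abs_mult)
  also have "\<bar>s\<bar> * \<bar>s\<bar> powr (p - 2) = \<bar>s\<bar> powr (p - 1)"
    using s powr_mult_base[of "\<bar>s\<bar>" "p - 2"] by simp
  also have "\<bar>s\<bar> powr (p - 1) \<le> \<epsilon> powr (p - 1)"
    using s \<epsilon> p by (intro powr_mono2') auto
  finally show ?thesis using p by simp
qed

lemma psi_sq_lipschitz:
  assumes "0 < p" "p < 1" "0 < \<epsilon>"
  shows "\<bar>psi p \<epsilon> (a\<^sup>2) - psi p \<epsilon> (b\<^sup>2)\<bar> \<le> p * \<epsilon> powr (p - 1) * \<bar>a - b\<bar>"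
  using field_differentiable_bound[of UNIV "\<lambda>s. psi p \<epsilon> (s\<^sup>2)" "\<lambda>s. 2 * s * psi' p \<epsilon> (s\<^sup>2)"]
    psi_sq_has_real_derivative[OF assms(3)] abs_psi_sq_derivative_le[OF assms]
  by (simp add: has_field_derivative_at_within)

lemma powr_add_le_add_powr:
  fixes a b p :: real
  assumes p: "0 < p" "p \<le> 1" and a: "0 \<le> a" and b: "0 \<le> b"
  shows "(a + b) powr p \<le> a powr p + b powr p"
proof (cases "a + b = 0")
  case True
  then show ?thesis using a b by simp
next
  case False
  then have s: "a + b > 0" using a b by simp
  have "a / (a + b) \<le> (a / (a + b)) powr p" "b / (a + b) \<le> (b / (a + b)) powr p"
    using powr_mono'[of p 1 "a / (a + b)"] powr_mono'[of p 1 "b / (a + b)"] p a b s by auto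
  moreover have "a / (a + b) + b / (a + b) = 1"
    using s by (simp add: add_divide_distrib[symmetric])
  ultimately have "1 \<le> (a / (a + b)) powr p + (b / (a + b)) powr p"
    by linarith
  also have "\<dots> = (a powr p + b powr p) / (a + b) powr p"
    using a b s by (simp add: powr_divide add_divide_distrib)
  finally show ?thesis using s by (simp add: le_divide_eq)
qed

lemma abs_powr_le_diff:
  fixes r s p :: real
  assumes "0 < p" "p \<le> 1"
  shows "\<bar>s\<bar> powr p \<le> \<bar>s - r\<bar> powr p + \<bar>r\<bar> powr p"
proof -
  have "\<bar>s\<bar> powr p \<le> (\<bar>s - r\<bar> + \<bar>r\<bar>) powr p"
    using assms by (intro powr_mono2) auto
  also have "\<dots> \<le> \<bar>s - r\<bar> powr p + \<bar>r\<bar> powr p"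
    using assms by (intro powr_add_le_add_powr) auto
  finally show ?thesis .
qed

lemma abs_le_one_add_sq: "\<bar>t::real\<bar> \<le> 1 + t\<^sup>2"
proof (cases "\<bar>t\<bar> \<le> 1")
  case True
  then show ?thesis by (simp add: add_increasing2)
next
  case False
  then have "\<bar>t\<bar> * 1 \<le> \<bar>t\<bar> * \<bar>t\<bar>" by (intro mult_left_mono) auto
  then show ?thesis by (simp add: power2_eq_square abs_mult_self_eq)
qed

lemma bounded_linear_of_quadratic_bound:
  fixes f :: "'v::real_normed_vector \<Rightarrow> real"
  assumes add: "\<And>x y. f (x + y) = f x + f y"
    and scale: "\<And>r x. f (r *\<^sub>R x) = r * f x"
    and bound: "\<And>x. \<bar>f x\<bar> \<le> A + B * (norm x)\<^sup>2"
  shows "bounded_linear f"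
proof (rule bounded_linear_intro[where K="\<bar>A\<bar> + \<bar>B\<bar>"])
  show "norm (f x) \<le> norm x * (\<bar>A\<bar> + \<bar>B\<bar>)" for x
  proof (cases "x = 0")
    case True
    then show ?thesis using scale[of 0 0] by simp
  next
    case False
    define y where "y = (1 / norm x) *\<^sub>R x"
    have "x = norm x *\<^sub>R y" using False by (simp add: y_def)
    then have "f x = norm x * f y" using scale by metis
    moreover have "\<bar>f y\<bar> \<le> \<bar>A\<bar> + \<bar>B\<bar>" using bound[of y] False by (simp add: y_def)
    ultimately show ?thesis by (simp add: abs_mult mult_left_mono)
  qed
qed (simp_all add: add scale)

lemma has_real_derivative_at_0_iff_sequentially:
  fixes g :: "real \<Rightarrow> real"
  shows "(g has_real_derivative D) (at 0) \<longleftrightarrow>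
    (\<forall>X. (\<forall>i. X i \<noteq> 0) \<longrightarrow> X \<longlonglongrightarrow> 0 \<longrightarrow> (\<lambda>i. (g (X i) - g 0) / X i) \<longlonglongrightarrow> D)"
  unfolding has_field_derivative_iff tendsto_at_iff_sequentially by (simp add: comp_def)

lemma has_real_derivative_along_line:
  assumes "(F has_derivative blinfun_apply D) (at u)"
  shows "((\<lambda>t. F (u + t *\<^sub>R v)) has_real_derivative blinfun_apply D v) (at 0)"
proof -
  have "((\<lambda>t::real. u + t *\<^sub>R v) has_derivative (\<lambda>t. t *\<^sub>R v)) (at 0)"
    by (auto intro!: derivative_eq_intros)
  from has_derivative_compose[OF this] assms
  have "((\<lambda>t. F (u + t *\<^sub>R v)) has_derivative (\<lambda>t. blinfun_apply D (t *\<^sub>R v))) (at 0)"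
    by simp
  moreover have "(\<lambda>t. blinfun_apply D (t *\<^sub>R v)) = (*) (blinfun_apply D v)"
    by (rule ext) (simp add: blinfun.scaleR_right)
  ultimately show ?thesis by (simp add: has_field_derivative_def)
qed

lemma quadratic_has_real_derivative_at_0:
  "((\<lambda>t::real. a + 2 * t * b + t\<^sup>2 * c) has_real_derivative 2 * b) (at 0)"
  by (auto intro!: derivative_eq_intros)

lemma power2_norm_add_scaleR:
  fixes u v :: "'v::real_inner"
  shows "(norm (u + t *\<^sub>R v))\<^sup>2 = (norm u)\<^sup>2 + 2 * t * inner u v + t\<^sup>2 * (norm v)\<^sup>2"
  unfolding power2_norm_eq_inner
  by (simp add: inner_add_left inner_add_right inner_commute power2_eq_square algebra_simps)

lemma parallelogram_law:
  fixes x y :: "'v::real_inner"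
  shows "(norm (x - y))\<^sup>2 + (norm (x + y))\<^sup>2 = 2 * (norm x)\<^sup>2 + 2 * (norm y)\<^sup>2"
  by (simp add: power2_norm_eq_inner inner_add_left inner_add_right inner_diff_left
      inner_diff_right inner_commute)

lemma weak_tendsto_and_norm_limsup_imp_tendsto:
  fixes x :: "nat \<Rightarrow> 'v::real_inner"
  assumes weak: "\<And>z. (\<lambda>k. inner (x k) z) \<longlonglongrightarrow> inner y z"
    and norm_limsup: "\<And>r. r > 0 \<Longrightarrow> eventually (\<lambda>k. (norm (x k))\<^sup>2 < (norm y)\<^sup>2 + r) sequentially"
  shows "x \<longlonglongrightarrow> y"
proof -
  have "(\<lambda>k. norm (x k - y)) \<longlonglongrightarrow> 0"
    unfolding tendsto_iff
  proof (intro allI impI)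
    fix r :: real
    assume r: "r > 0"
    have "(\<lambda>k. inner (x k - y) y) \<longlonglongrightarrow> inner y y - inner y y"
      unfolding inner_diff_left by (intro tendsto_intros weak)
    then have "eventually (\<lambda>k. - (r\<^sup>2 / 4) < inner (x k - y) y) sequentially"
      using r by (intro order_tendstoD) auto
    moreover have "eventually (\<lambda>k. (norm (x k))\<^sup>2 < (norm y)\<^sup>2 + r\<^sup>2 / 2) sequentially"
      using r by (intro norm_limsup) simp
    ultimately show "eventually (\<lambda>k. dist (norm (x k - y)) 0 < r) sequentially"
    proof eventually_elim
      case (elim k)
      have "(norm (x k - y))\<^sup>2 = (norm (x k))\<^sup>2 - (norm y)\<^sup>2 - 2 * inner (x k - y) y"
        by (simp add: power2_norm_eq_inner inner_diff_left inner_diff_right inner_commute)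
      then have "(norm (x k - y))\<^sup>2 < r\<^sup>2" using elim by linarith
      then show ?case using r by (simp add: power2_less_imp_less less_imp_le)
    qed
  qed
  then show ?thesis
    by (simp add: tendsto_norm_zero_iff LIM_zero_iff)
qed

lemma Cauchy_if_power2_dist_le:
  fixes w :: "nat \<Rightarrow> 'a::real_normed_vector"
  assumes dist_le: "\<And>n m. n \<le> m \<Longrightarrow> (norm (w n - w m))\<^sup>2 \<le> b n"
    and b_lim: "b \<longlonglongrightarrow> 0"
  shows "Cauchy w"
proof (rule CauchyI)
  fix e :: real
  assume e: "0 < e"
  then obtain M where M: "\<And>n. n \<ge> M \<Longrightarrow> b n < e\<^sup>2"
    using b_lim by (metis eventually_sequentially order_tendstoD(2) zero_less_power)
  have "norm (w m - w n) < e" if "m \<ge> M" "n \<ge> M" for m n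
  proof -
    have "(norm (w m - w n))\<^sup>2 < e\<^sup>2"
      using dist_le[of m n] dist_le[of n m] M[OF that(1)] M[OF that(2)]
      by (cases "m \<le> n") (simp_all add: norm_minus_commute)
    then show ?thesis using e by (simp add: power2_less_imp_less less_imp_le)
  qed
  then show "\<exists>M. \<forall>m\<ge>M. \<forall>n\<ge>M. norm (w m - w n) < e" by blast
qed

text \<open>Elements of nearly minimal norm form a Cauchy sequence by the parallelogram law.\<close>

lemma decreasing_midpoint_convex_has_convergent_selection:
  fixes C :: "nat \<Rightarrow> 'v::{real_inner,complete_space} set"
  assumes nonempty: "\<And>n. C n \<noteq> {}"
    and decreasing: "\<And>n m. n \<le> m \<Longrightarrow> C m \<subseteq> C n"
    and midpoint: "\<And>n a b. a \<in> C n \<Longrightarrow> b \<in> C n \<Longrightarrow> (1/2) *\<^sub>R (a + b) \<in> C n"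
    and bounded: "\<And>n w. w \<in> C n \<Longrightarrow> norm w \<le> R"
  shows "\<exists>w m. (\<forall>n. w n \<in> C n) \<and> w \<longlonglongrightarrow> m"
proof -
  define a where "a n = Inf (norm ` C n)" for n
  have bdd: "bdd_below (norm ` C n)" for n by (rule bdd_belowI[of _ 0]) auto
  have a_le: "a n \<le> norm w" if "w \<in> C n" for n w
    unfolding a_def using that bdd by (intro cInf_lower) auto
  have a_nonneg: "0 \<le> a n" for n
    unfolding a_def using nonempty by (intro cInf_greatest) auto
  have "a n \<le> a m" if "n \<le> m" for n m
    unfolding a_def using nonempty[of m] decreasing[OF that] bdd[of n]
    by (intro cInf_superset_mono) auto
  then have "incseq a" by (simp add: incseq_def)
  moreover have "a n \<le> R" for n
    using nonempty[of n] a_le bounded by (meson ex_in_conv order_trans)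
  ultimately obtain A where a_lim: "a \<longlonglongrightarrow> A" and a_le_A: "\<And>n. a n \<le> A"
    using incseq_convergent[of a R] by blast
  define d where "d n = inverse (real (Suc n))" for n
  have d_lim: "d \<longlonglongrightarrow> 0"
    unfolding d_def by (rule LIMSEQ_inverse_real_of_nat)
  have d_anti: "d m \<le> d n" if "n \<le> m" for n m
    using that unfolding d_def by (simp add: le_imp_inverse_le)
  have "\<exists>w. w \<in> C n \<and> norm w < a n + d n" for n
    using cInf_lessD[of "norm ` C n" "a n + d n"] nonempty[of n] by (fastforce simp: a_def d_def)
  then obtain w where w_in: "\<And>n. w n \<in> C n" and w_norm: "\<And>n. norm (w n) < a n + d n"
    by metis
  define b where "b n = 4 * ((A + d n)\<^sup>2 - (a n)\<^sup>2)" for n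
  have "b \<longlonglongrightarrow> 4 * ((A + 0)\<^sup>2 - A\<^sup>2)"
    unfolding b_def by (intro tendsto_intros a_lim d_lim)
  then have b_lim: "b \<longlonglongrightarrow> 0" by simp
  have dist_le: "(norm (w n - w m))\<^sup>2 \<le> b n" if nm: "n \<le> m" for n m
  proof -
    have "w m \<in> C n" using decreasing[OF nm] w_in by blast
    then have "a n \<le> norm ((1/2) *\<^sub>R (w n + w m))" using midpoint w_in a_le by blast
    then have "(2 * a n)\<^sup>2 \<le> (norm (w n + w m))\<^sup>2"
      using a_nonneg[of n] by (intro power_mono) auto
    moreover have "(norm (w n))\<^sup>2 \<le> (A + d n)\<^sup>2" "(norm (w m))\<^sup>2 \<le> (A + d n)\<^sup>2"
      using w_norm[of n] w_norm[of m] a_le_A[of n] a_le_A[of m] d_anti[OF nm]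
      by (auto intro!: power_mono)
    ultimately show ?thesis
      using parallelogram_law[of "w n" "w m"] by (simp add: b_def power_mult_distrib)
  qed
  have "Cauchy w"
    using dist_le b_lim by (rule Cauchy_if_power2_dist_le)
  then show ?thesis using w_in Cauchy_convergent_iff convergent_def by blast
qed

locale definite_quadratic_form =
  fixes N :: "'v::{real_inner,complete_space} \<Rightarrow> real" and K :: real
  assumes nonneg: "N a \<ge> 0"
    and parallelogram: "N (a + b) + N (a - b) = 2 * N a + 2 * N b"
    and scaleR: "N (c *\<^sub>R a) = c\<^sup>2 * N a"
    and bounded: "N a \<le> K * (norm a)\<^sup>2"
    and definite: "N a = 0 \<Longrightarrow> a = 0"
begin

lemma midpoint_le: "N ((1/2) *\<^sub>R (a + b)) \<le> (N a + N b) / 2"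
proof -
  have "N ((1/2) *\<^sub>R (a + b)) = N (a + b) / 4"
    using scaleR[of "1/2" "a + b"] by (simp add: power2_eq_square)
  also have "N (a + b) \<le> 2 * N a + 2 * N b"
    using parallelogram[of a b] nonneg[of "a - b"] by linarith
  finally show ?thesis by simp
qed

lemma le_add_dist: "N a \<le> 2 * K * (norm (a - b))\<^sup>2 + 2 * N b"
  using parallelogram[of "a - b" b] nonneg[of "a - 2 *\<^sub>R b"] bounded[of "a - b"]
  by (simp add: algebra_simps scaleR_2)

text \<open>Since \<open>N\<close> is definite, no nonzero vector lies in the intersection of the half-space
  \<open>\<delta> \<le> inner w z\<close> with the sublevel sets of \<open>N\<close>; the selection lemma produces such a vector as a limit.\<close>

lemma null_imp_not_frequently_above:
  assumes bounded_seq: "\<And>k. norm (x k) \<le> R"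
    and null: "(\<lambda>k. N (x k)) \<longlonglongrightarrow> 0"
    and \<delta>: "\<delta> > 0"
  shows "\<not> frequently (\<lambda>k. \<delta> \<le> inner (x k) z) sequentially"
proof
  assume freq: "frequently (\<lambda>k. \<delta> \<le> inner (x k) z) sequentially"
  define d where "d n = inverse (real (Suc n))" for n
  have d_lim: "d \<longlonglongrightarrow> 0"
    unfolding d_def by (rule LIMSEQ_inverse_real_of_nat)
  have d_anti: "d m \<le> d n" if "n \<le> m" for n m
    using that unfolding d_def by (simp add: le_imp_inverse_le)
  have d_pos: "d n > 0" for n unfolding d_def by simp
  define C where "C n = {w. \<delta> \<le> inner w z \<and> norm w \<le> R \<and> N w \<le> d n}" for n
  have "C n \<noteq> {}" for n
  proof -
    have "eventually (\<lambda>k. N (x k) < d n) sequentially"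
      using null d_pos[of n] by (rule order_tendstoD(2))
    from frequently_eventually_frequently[OF freq this]
    obtain k where "\<delta> \<le> inner (x k) z" "N (x k) < d n" using frequently_ex by blast
    then have "x k \<in> C n" using bounded_seq[of k] by (simp add: C_def)
    then show ?thesis by blast
  qed
  moreover have "C m \<subseteq> C n" if "n \<le> m" for n m
    using that d_anti unfolding C_def by (auto intro: order_trans)
  moreover have "(1/2) *\<^sub>R (a + b) \<in> C n" if "a \<in> C n" "b \<in> C n" for n a b
  proof -
    have "norm ((1/2) *\<^sub>R (a + b)) \<le> (norm a + norm b) / 2"
      using norm_triangle_ineq[of a b] by simp
    then show ?thesis
      using that midpoint_le[of a b] unfolding C_def by (auto simp: inner_add_left)
  qed
  ultimately obtain w m where w: "\<And>n. w n \<in> C n" and w_lim: "w \<longlonglongrightarrow> m"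
    using decreasing_midpoint_convex_has_convergent_selection[of C R] unfolding C_def by blast
  have "(\<lambda>n. inner (w n) z) \<longlonglongrightarrow> inner m z"
    using w_lim by (intro tendsto_intros)
  then have m_z: "\<delta> \<le> inner m z"
    using w by (intro LIMSEQ_le_const) (auto simp: C_def)
  have N_m_le: "N m \<le> 2 * K * (norm (m - w n))\<^sup>2 + 2 * d n" for n
    using le_add_dist[of m "w n"] w[of n] by (simp add: C_def)
  have "(\<lambda>n. 2 * K * (norm (m - w n))\<^sup>2 + 2 * d n) \<longlonglongrightarrow> 2 * K * (norm (m - m))\<^sup>2 + 2 * 0"
    using w_lim d_lim by (intro tendsto_intros)
  then have "(\<lambda>n. 2 * K * (norm (m - w n))\<^sup>2 + 2 * d n) \<longlonglongrightarrow> 0" by simp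
  then have "N m \<le> 0"
    by (rule LIMSEQ_le_const) (use N_m_le in blast)
  then have "m = 0" using nonneg[of m] definite by simp
  then show False using m_z \<delta> by simp
qed

lemma null_imp_weakly_null:
  assumes bounded_seq: "\<And>k. norm (x k) \<le> R"
    and null: "(\<lambda>k. N (x k)) \<longlonglongrightarrow> 0"
  shows "(\<lambda>k. inner (x k) z) \<longlonglongrightarrow> 0"
proof (rule order_tendstoI)
  fix \<delta> :: real
  assume "\<delta> > 0"
  with null_imp_not_frequently_above[OF bounded_seq null]
  show "eventually (\<lambda>k. inner (x k) z < \<delta>) sequentially"
    by (simp add: not_frequently not_le)
next
  fix \<delta> :: real
  assume "\<delta> < 0"
  with null_imp_not_frequently_above[OF bounded_seq null, of "- \<delta>" "- z"]
  show "eventually (\<lambda>k. \<delta> < inner (x k) z) sequentially"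
    by (simp add: not_frequently not_le)
qed

end

locale L2_embedding =
  fixes \<Omega> :: "'a::euclidean_space set"
    and emb :: "'v::{real_inner,complete_space} \<Rightarrow> 'a \<Rightarrow> real"
    and C :: real
  assumes \<Omega>_lmeasurable: "\<Omega> \<in> lmeasurable"
    and L2_emb: "L2 \<Omega> (emb v)"
    and emb_linear: "emb (a *\<^sub>R u + b *\<^sub>R v) = (\<lambda>x. a * emb u x + b * emb v x)"
    and L2_norm_emb_le: "L2_norm \<Omega> (emb v) \<le> C * norm v"
    and emb_eq_0: "(AE x in lebesgue_on \<Omega>. emb v x = 0) \<Longrightarrow> v = 0"

lemma L2_embedding_if_compact_dense_embedding:
  assumes "lipschitz_domain \<Omega>" and "compact_dense_embedding \<Omega> emb"
  obtains C where "L2_embedding \<Omega> emb C"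
proof -
  have "bounded \<Omega>" "\<Omega> \<in> sets lebesgue"
    using assms(1) by (auto simp: lipschitz_domain_def)
  then have "\<Omega> \<in> lmeasurable" by (rule bounded_set_imp_lmeasurable)
  with assms(2) show thesis
    by (auto simp: compact_dense_embedding_def L2_embedding_def intro: that)
qed

context L2_embedding
begin

abbreviation "M \<equiv> lebesgue_on \<Omega>"

abbreviation "\<mu> \<equiv> measure M \<Omega>"

definition L2_sq :: "'v \<Rightarrow> real" where
  "L2_sq v = integral\<^sup>L M (\<lambda>x. (emb v x)\<^sup>2)"

definition L2_inner :: "'v \<Rightarrow> 'v \<Rightarrow> real" where
  "L2_inner a b = integral\<^sup>L M (\<lambda>x. emb a x * emb b x)"

lemma finite_measure_M: "finite_measure M"
  using \<Omega>_lmeasurable by (rule finite_measure_lebesgue_on)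

lemma integrable_const [simp, intro]: "integrable M (\<lambda>x. c::real)"
  using finite_measure.integrable_const[OF finite_measure_M] .

lemma emb_measurable [measurable]: "emb v \<in> borel_measurable M"
  using L2_emb by (simp add: L2_def)

lemma integrable_emb_sq [simp, intro]: "integrable M (\<lambda>x. (emb v x)\<^sup>2)"
  using L2_emb by (simp add: L2_def)

lemma emb_add: "emb (u + v) x = emb u x + emb v x"
  using emb_linear[of 1 u 1 v] by (simp add: fun_eq_iff)

lemma emb_scaleR: "emb (c *\<^sub>R u) x = c * emb u x"
  using emb_linear[of c u 0 u] by (simp add: fun_eq_iff)

lemma emb_diff: "emb (u - v) x = emb u x - emb v x"
  using emb_linear[of 1 u "-1" v] by (simp add: fun_eq_iff)

lemma emb_zero: "emb 0 x = 0"
  using emb_scaleR[of 0 0 x] by simp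

lemma integrable_abs_emb [simp, intro]: "integrable M (\<lambda>x. \<bar>emb v x\<bar>)"
  by (rule Bochner_Integration.integrable_bound[where f="\<lambda>x. 1 + (emb v x)\<^sup>2"])
    (auto intro: abs_le_one_add_sq order_trans)

lemma emb_mult_eq: "emb a x * emb b x = ((emb (a + b) x)\<^sup>2 - (emb (a - b) x)\<^sup>2) / 4"
  by (simp add: emb_add emb_diff power2_eq_square algebra_simps)

lemma integrable_emb_mult [simp, intro]: "integrable M (\<lambda>x. emb a x * emb b x)"
  unfolding emb_mult_eq by (intro integrable_divide integrable_diff) auto

lemma integral_abs_emb_le: "integral\<^sup>L M (\<lambda>x. \<bar>emb v x\<bar>) \<le> \<mu> + L2_sq v"
proof -
  have "integral\<^sup>L M (\<lambda>x. \<bar>emb v x\<bar>) \<le> integral\<^sup>L M (\<lambda>x. 1 + (emb v x)\<^sup>2)"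
    by (rule integral_mono) (auto intro: abs_le_one_add_sq)
  also have "\<dots> = \<mu> + L2_sq v"
    unfolding L2_sq_def by (subst Bochner_Integration.integral_add) auto
  finally show ?thesis .
qed

lemma L2_norm_emb: "L2_norm \<Omega> (emb v) = sqrt (L2_sq v)"
  by (simp add: L2_norm_def L2_sq_def)

lemma L2_sq_nonneg: "L2_sq v \<ge> 0"
  unfolding L2_sq_def by (intro integral_nonneg_AE) auto

lemma L2_sq_parallelogram: "L2_sq (a + b) + L2_sq (a - b) = 2 * L2_sq a + 2 * L2_sq b"
proof -
  have "L2_sq (a + b) + L2_sq (a - b) = integral\<^sup>L M (\<lambda>x. (emb (a + b) x)\<^sup>2 + (emb (a - b) x)\<^sup>2)"
    unfolding L2_sq_def by (subst Bochner_Integration.integral_add) auto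
  also have "\<dots> = integral\<^sup>L M (\<lambda>x. 2 * (emb a x)\<^sup>2 + 2 * (emb b x)\<^sup>2)"
    by (rule Bochner_Integration.integral_cong)
      (auto simp: emb_add emb_diff power2_eq_square algebra_simps)
  also have "\<dots> = 2 * L2_sq a + 2 * L2_sq b"
    unfolding L2_sq_def by (subst Bochner_Integration.integral_add) auto
  finally show ?thesis .
qed

lemma L2_sq_scaleR: "L2_sq (c *\<^sub>R a) = c\<^sup>2 * L2_sq a"
  unfolding L2_sq_def by (simp add: emb_scaleR power_mult_distrib)

lemma L2_sq_le: "L2_sq v \<le> C\<^sup>2 * (norm v)\<^sup>2"
proof -
  have "sqrt (L2_sq v) \<le> C * norm v" using L2_norm_emb_le[of v] by (simp add: L2_norm_emb)
  then have "(sqrt (L2_sq v))\<^sup>2 \<le> (C * norm v)\<^sup>2"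
    using L2_sq_nonneg[of v] by (intro power_mono) auto
  then show ?thesis using L2_sq_nonneg[of v] by (simp add: power_mult_distrib)
qed

lemma L2_sq_eq_0: "L2_sq v = 0 \<Longrightarrow> v = 0"
proof -
  assume "L2_sq v = 0"
  then have "AE x in M. (emb v x)\<^sup>2 = 0"
    unfolding L2_sq_def by (subst integral_nonneg_eq_0_iff_AE[symmetric]) auto
  then show "v = 0" by (intro emb_eq_0) simp
qed

sublocale L2_sq: definite_quadratic_form L2_sq "C\<^sup>2"
  by unfold_locales (use L2_sq_nonneg L2_sq_parallelogram L2_sq_scaleR L2_sq_le L2_sq_eq_0 in auto)

lemma L2_norm_diff_sq: "(L2_norm \<Omega> (\<lambda>x. emb u x - emb v x))\<^sup>2 = L2_sq (u - v)"
proof -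
  have "(\<lambda>x. emb u x - emb v x) = emb (u - v)" by (simp add: emb_diff fun_eq_iff)
  then show ?thesis using L2_sq_nonneg[of "u - v"] by (simp add: L2_norm_emb)
qed

lemma L2_sq_add_scaleR: "L2_sq (d + t *\<^sub>R v) = L2_sq d + 2 * t * L2_inner d v + t\<^sup>2 * L2_sq v"
proof -
  have "L2_sq (d + t *\<^sub>R v) = integral\<^sup>L M
      (\<lambda>x. ((emb d x)\<^sup>2 + (2 * t) * (emb d x * emb v x)) + t\<^sup>2 * (emb v x)\<^sup>2)"
    unfolding L2_sq_def by (rule Bochner_Integration.integral_cong)
      (auto simp: emb_add emb_scaleR power2_eq_square algebra_simps)
  also have "\<dots> = L2_sq d + 2 * t * L2_inner d v + t\<^sup>2 * L2_sq v"
    unfolding L2_sq_def L2_inner_def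
    by (subst Bochner_Integration.integral_add; (subst Bochner_Integration.integral_add)?) auto
  finally show ?thesis .
qed

lemma L2_inner_polarization: "L2_inner a b = (L2_sq (a + b) - L2_sq (a - b)) / 4"
  unfolding L2_inner_def L2_sq_def emb_mult_eq by (simp add: Bochner_Integration.integral_diff)

lemma abs_L2_inner_le: "\<bar>L2_inner a b\<bar> \<le> C\<^sup>2 * norm a * norm b"
proof (cases "a = 0 \<or> b = 0")
  case True
  then show ?thesis by (auto simp: L2_inner_def emb_zero)
next
  case False
  define a' where "a' = (1 / norm a) *\<^sub>R a"
  define b' where "b' = (1 / norm b) *\<^sub>R b"
  have "\<bar>L2_inner a' b'\<bar> \<le> (L2_sq (a' + b') + L2_sq (a' - b')) / 4"
    unfolding L2_inner_polarization using L2_sq_nonneg[of "a' + b'"] L2_sq_nonneg[of "a' - b'"] by simp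
  also have "\<dots> \<le> C\<^sup>2 * ((norm a')\<^sup>2 + (norm b')\<^sup>2) / 2"
    using L2_sq_parallelogram[of a' b'] L2_sq_le[of a'] L2_sq_le[of b'] by (simp add: algebra_simps)
  also have "\<dots> = C\<^sup>2" using False by (simp add: a'_def b'_def)
  finally have "norm a * norm b * \<bar>L2_inner a' b'\<bar> \<le> norm a * norm b * C\<^sup>2"
    by (intro mult_left_mono) auto
  moreover have "L2_inner a b = norm a * norm b * L2_inner a' b'"
    using False by (simp add: a'_def b'_def L2_inner_def emb_scaleR field_simps)
  ultimately show ?thesis by (simp add: abs_mult algebra_simps)
qed

lemma integrable_psi:
  assumes p: "0 < p" "p < 1" and \<epsilon>: "0 < \<epsilon>"
  shows "integrable M (\<lambda>x. psi p \<epsilon> ((emb u x)\<^sup>2))"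
proof (rule Bochner_Integration.integrable_bound
    [where f="\<lambda>x. psi p \<epsilon> 0 + p * \<epsilon> powr (p - 1) * \<bar>emb u x\<bar>"])
  show "integrable M (\<lambda>x. psi p \<epsilon> 0 + p * \<epsilon> powr (p - 1) * \<bar>emb u x\<bar>)"
    by (intro Bochner_Integration.integrable_add integrable_const integrable_mult_right integrable_abs_emb)
  have "norm (psi p \<epsilon> ((emb u x)\<^sup>2)) \<le> norm (psi p \<epsilon> 0 + p * \<epsilon> powr (p - 1) * \<bar>emb u x\<bar>)" for x
  proof -
    have "0 \<le> psi p \<epsilon> ((emb u x)\<^sup>2)"
      using powr_le_psi[OF p \<epsilon>, of "(emb u x)\<^sup>2"] by (meson order_trans powr_ge_zero zero_le_power2)
    moreover have "psi p \<epsilon> ((emb u x)\<^sup>2) \<le> psi p \<epsilon> (0\<^sup>2) + p * \<epsilon> powr (p - 1) * \<bar>emb u x - 0\<bar>"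
      using psi_sq_lipschitz[OF p \<epsilon>, of "emb u x" 0] by linarith
    ultimately show ?thesis by simp
  qed
  then show "AE x in M. norm (psi p \<epsilon> ((emb u x)\<^sup>2)) \<le> norm (psi p \<epsilon> 0 + p * \<epsilon> powr (p - 1) * \<bar>emb u x\<bar>)"
    by simp
qed simp

lemma integrable_abs_powr:
  assumes p: "0 < p" "p < 1"
  shows "integrable M (\<lambda>x. \<bar>emb u x\<bar> powr p)"
proof (rule Bochner_Integration.integrable_bound[where f="\<lambda>x. psi p 1 ((emb u x)\<^sup>2)"])
  show "integrable M (\<lambda>x. psi p 1 ((emb u x)\<^sup>2))"
    using p by (rule integrable_psi) simp
  have "\<bar>emb u x\<bar> powr p \<le> psi p 1 ((emb u x)\<^sup>2)" for x
    using powr_le_psi[OF p, of 1 "(emb u x)\<^sup>2"] by (simp add: sq_powr_half)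
  then show "AE x in M. norm (\<bar>emb u x\<bar> powr p) \<le> norm (psi p 1 ((emb u x)\<^sup>2))"
    by (auto intro: order_trans[OF _ abs_ge_self])
qed simp

lemma G_zero_eq: "G \<Omega> emb p 0 u = integral\<^sup>L M (\<lambda>x. \<bar>emb u x\<bar> powr p)"
  unfolding G_def by (rule Bochner_Integration.integral_cong) (simp_all add: psi_zero sq_powr_half)

lemma G_zero_le_G:
  assumes p: "0 < p" "p < 1" and \<epsilon>: "0 < \<epsilon>"
  shows "G \<Omega> emb p 0 u \<le> G \<Omega> emb p \<epsilon> u"
  unfolding G_zero_eq unfolding G_def
proof (rule integral_mono)
  show "\<bar>emb u x\<bar> powr p \<le> psi p \<epsilon> ((emb u x)\<^sup>2)" for x
    using powr_le_psi[OF p \<epsilon>, of "(emb u x)\<^sup>2"] by (simp add: sq_powr_half)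
qed (simp_all add: integrable_abs_powr[OF p] integrable_psi[OF p \<epsilon>])

lemma G_le_G_zero_add:
  assumes p: "0 < p" "p < 1" and \<epsilon>: "0 < \<epsilon>"
  shows "G \<Omega> emb p \<epsilon> u \<le> G \<Omega> emb p 0 u + (1 - p/2) * \<epsilon> powr p * \<mu>"
proof -
  have "G \<Omega> emb p \<epsilon> u \<le> integral\<^sup>L M (\<lambda>x. \<bar>emb u x\<bar> powr p + (1 - p/2) * \<epsilon> powr p)"
    unfolding G_def
  proof (rule integral_mono)
    show "psi p \<epsilon> ((emb u x)\<^sup>2) \<le> \<bar>emb u x\<bar> powr p + (1 - p/2) * \<epsilon> powr p" for x
      using psi_le_powr_add[OF p \<epsilon>, of "(emb u x)\<^sup>2"] by (simp add: sq_powr_half)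
  qed (simp_all add: integrable_abs_powr[OF p] integrable_psi[OF p \<epsilon>])
  also have "\<dots> = G \<Omega> emb p 0 u + (1 - p/2) * \<epsilon> powr p * \<mu>"
    unfolding G_zero_eq by (subst Bochner_Integration.integral_add) (auto intro: integrable_abs_powr[OF p])
  finally show ?thesis .
qed

lemma G_zero_diff_le:
  assumes p: "0 < p" "p < 1"
  shows "G \<Omega> emb p 0 a - G \<Omega> emb p 0 b \<le> integral\<^sup>L M (\<lambda>x. \<bar>emb (a - b) x\<bar> powr p)"
proof -
  have "G \<Omega> emb p 0 a \<le> integral\<^sup>L M (\<lambda>x. \<bar>emb (a - b) x\<bar> powr p + \<bar>emb b x\<bar> powr p)"
    unfolding G_zero_eq
  proof (rule integral_mono)
    show "\<bar>emb a x\<bar> powr p \<le> \<bar>emb (a - b) x\<bar> powr p + \<bar>emb b x\<bar> powr p" for x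
      using abs_powr_le_diff[of p "emb a x" "emb b x"] p by (simp add: emb_diff)
  qed (simp_all add: integrable_abs_powr[OF p])
  also have "\<dots> = integral\<^sup>L M (\<lambda>x. \<bar>emb (a - b) x\<bar> powr p) + G \<Omega> emb p 0 b"
    unfolding G_zero_eq by (subst Bochner_Integration.integral_add) (auto intro: integrable_abs_powr[OF p])
  finally show ?thesis by simp
qed

lemma integral_abs_powr_le:
  assumes p: "0 < p" "p < 1" and \<eta>: "0 < \<eta>"
  shows "integral\<^sup>L M (\<lambda>x. \<bar>emb w x\<bar> powr p)
    \<le> p/2 * L2_sq w / \<eta> powr (2 - p) + (1 - p/2) * \<eta> powr p * \<mu>"
proof -
  have "integral\<^sup>L M (\<lambda>x. \<bar>emb w x\<bar> powr p)
      \<le> integral\<^sup>L M (\<lambda>x. (p/2 / \<eta> powr (2 - p)) * (emb w x)\<^sup>2 + (1 - p/2) * \<eta> powr p)"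
    using integrable_abs_powr[OF p] powr_le_tangent[OF p \<eta>]
    by (intro integral_mono Bochner_Integration.integrable_add integrable_mult_right)
      (simp_all add: sq_powr_half[symmetric])
  also have "\<dots> = p/2 * L2_sq w / \<eta> powr (2 - p) + (1 - p/2) * \<eta> powr p * \<mu>"
    unfolding L2_sq_def by (subst Bochner_Integration.integral_add) auto
  finally show ?thesis .
qed

text \<open>Take \<open>\<eta>\<^sup>2 = L2_sq w\<close> in the previous bound.\<close>

lemma integral_abs_powr_le_L2_sq_powr:
  assumes p: "0 < p" "p < 1"
  shows "integral\<^sup>L M (\<lambda>x. \<bar>emb w x\<bar> powr p) \<le> (p/2 + (1 - p/2) * \<mu>) * L2_sq w powr (p/2)"
proof (cases "w = 0")
  case True
  then show ?thesis by (simp add: emb_zero L2_sq_def)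
next
  case False
  define q where "q = L2_sq w"
  have q: "q > 0"
    using False L2_sq_nonneg[of w] L2_sq_eq_0[of w] unfolding q_def by (metis less_eq_real_def)
  define \<eta> where "\<eta> = q powr (1/2)"
  have \<eta>: "\<eta> > 0" using q by (simp add: \<eta>_def)
  have "\<eta> powr (2 - p) = q powr (1 - p/2)" "\<eta> powr p = q powr (p/2)"
    using q by (simp_all add: \<eta>_def powr_powr diff_divide_distrib)
  moreover have "q / q powr (1 - p/2) = q powr (p/2)"
    using q powr_diff[of q 1 "1 - p/2"] by simp
  then have "p/2 * q / q powr (1 - p/2) = p/2 * q powr (p/2)"
    by (metis times_divide_eq_right)
  ultimately have "p/2 * q / \<eta> powr (2 - p) + (1 - p/2) * \<eta> powr p * \<mu>
      = (p/2 + (1 - p/2) * \<mu>) * q powr (p/2)"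
    by (simp add: algebra_simps)
  then show ?thesis using integral_abs_powr_le[OF p \<eta>, of w] by (simp add: q_def)
qed

lemma integral_abs_powr_tendsto_0:
  assumes p: "0 < p" "p < 1" and null: "(\<lambda>k. L2_sq (w k)) \<longlonglongrightarrow> 0"
  shows "(\<lambda>k. integral\<^sup>L M (\<lambda>x. \<bar>emb (w k) x\<bar> powr p)) \<longlonglongrightarrow> 0"
proof (rule tendsto_sandwich[OF _ _ tendsto_const])
  show "eventually (\<lambda>k. 0 \<le> integral\<^sup>L M (\<lambda>x. \<bar>emb (w k) x\<bar> powr p)) sequentially"
    by (simp add: integral_nonneg_AE)
  show "eventually (\<lambda>k. integral\<^sup>L M (\<lambda>x. \<bar>emb (w k) x\<bar> powr p)
      \<le> (p/2 + (1 - p/2) * \<mu>) * L2_sq (w k) powr (p/2)) sequentially"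
    using integral_abs_powr_le_L2_sq_powr[OF p] by simp
  have "(\<lambda>k. (p/2 + (1 - p/2) * \<mu>) * L2_sq (w k) powr (p/2)) \<longlonglongrightarrow> (p/2 + (1 - p/2) * \<mu>) * 0"
    using p L2_sq_nonneg
    by (intro tendsto_mult tendsto_const tendsto_zero_powrI[OF null tendsto_const]) auto
  then show "(\<lambda>k. (p/2 + (1 - p/2) * \<mu>) * L2_sq (w k) powr (p/2)) \<longlonglongrightarrow> 0" by simp
qed

definition dG :: "real \<Rightarrow> real \<Rightarrow> 'v \<Rightarrow> 'v \<Rightarrow> real" where
  "dG p \<epsilon> u v = integral\<^sup>L M (\<lambda>x. 2 * emb u x * psi' p \<epsilon> ((emb u x)\<^sup>2) * emb v x)"

lemma abs_dG_integrand_le: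
  assumes "0 < p" "p < 1" "0 < \<epsilon>"
  shows "\<bar>2 * emb u x * psi' p \<epsilon> ((emb u x)\<^sup>2) * emb v x\<bar> \<le> p * \<epsilon> powr (p - 1) * \<bar>emb v x\<bar>"
  using mult_right_mono[OF abs_psi_sq_derivative_le[OF assms, of "emb u x"] abs_ge_zero[of "emb v x"]]
  by (simp add: abs_mult)

lemma integrable_dG_integrand:
  assumes "0 < p" "p < 1" "0 < \<epsilon>"
  shows "integrable M (\<lambda>x. 2 * emb u x * psi' p \<epsilon> ((emb u x)\<^sup>2) * emb v x)"
proof (rule Bochner_Integration.integrable_bound[where f="\<lambda>x. p * \<epsilon> powr (p - 1) * \<bar>emb v x\<bar>"])
  show "AE x in M. norm (2 * emb u x * psi' p \<epsilon> ((emb u x)\<^sup>2) * emb v x)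
      \<le> norm (p * \<epsilon> powr (p - 1) * \<bar>emb v x\<bar>)"
    using abs_dG_integrand_le[OF assms] assms by (simp add: abs_mult)
qed simp_all

lemma bounded_linear_dG:
  assumes p: "0 < p" "p < 1" and \<epsilon>: "0 < \<epsilon>"
  shows "bounded_linear (dG p \<epsilon> u)"
proof (rule bounded_linear_of_quadratic_bound
    [where A="p * \<epsilon> powr (p - 1) * \<mu>" and B="p * \<epsilon> powr (p - 1) * C\<^sup>2"])
  note integrable = integrable_dG_integrand[OF p \<epsilon>]
  show "dG p \<epsilon> u (x + y) = dG p \<epsilon> u x + dG p \<epsilon> u y" for x y
    unfolding dG_def emb_add distrib_left
    by (rule Bochner_Integration.integral_add[OF integrable integrable])
  show "dG p \<epsilon> u (r *\<^sub>R x) = r * dG p \<epsilon> u x" for r x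
    unfolding dG_def emb_scaleR by (simp add: mult_ac)
  show "\<bar>dG p \<epsilon> u x\<bar> \<le> p * \<epsilon> powr (p - 1) * \<mu> + p * \<epsilon> powr (p - 1) * C\<^sup>2 * (norm x)\<^sup>2" for x
  proof -
    have "\<bar>dG p \<epsilon> u x\<bar> \<le> integral\<^sup>L M (\<lambda>y. \<bar>2 * emb u y * psi' p \<epsilon> ((emb u y)\<^sup>2) * emb x y\<bar>)"
      unfolding dG_def by (rule integral_abs_bound[unfolded real_norm_def])
    also have "\<dots> \<le> integral\<^sup>L M (\<lambda>y. p * \<epsilon> powr (p - 1) * \<bar>emb x y\<bar>)"
      using integrable abs_dG_integrand_le[OF p \<epsilon>] by (intro integral_mono integrable_abs) auto
    also have "\<dots> \<le> p * \<epsilon> powr (p - 1) * (\<mu> + C\<^sup>2 * (norm x)\<^sup>2)"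
      using integral_abs_emb_le[of x] L2_sq_le[of x] p by (simp add: mult_left_mono)
    finally show ?thesis by (simp add: algebra_simps)
  qed
qed

lemma has_real_derivative_G:
  assumes p: "0 < p" "p < 1" and \<epsilon>: "0 < \<epsilon>"
  shows "((\<lambda>t. G \<Omega> emb p \<epsilon> (u + t *\<^sub>R v)) has_real_derivative dG p \<epsilon> u v) (at 0)"
  unfolding has_real_derivative_at_0_iff_sequentially
proof (intro allI impI)
  fix X :: "nat \<Rightarrow> real"
  assume X: "\<forall>i. X i \<noteq> 0" "X \<longlonglongrightarrow> 0"
  define h where "h s = psi p \<epsilon> (s\<^sup>2)" for s
  define q where "q i x = (h (emb u x + X i * emb v x) - h (emb u x)) / X i" for i x
  have G_line: "G \<Omega> emb p \<epsilon> (u + t *\<^sub>R v) = integral\<^sup>L M (\<lambda>x. h (emb u x + t * emb v x))" for t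
    unfolding G_def h_def by (simp add: emb_add emb_scaleR)
  have integrable_h: "integrable M (\<lambda>x. h (emb u x + t * emb v x))" for t
    using integrable_psi[OF p \<epsilon>, of "u + t *\<^sub>R v"] by (simp add: h_def emb_add emb_scaleR)
  have quotient: "(G \<Omega> emb p \<epsilon> (u + X i *\<^sub>R v) - G \<Omega> emb p \<epsilon> (u + 0 *\<^sub>R v)) / X i = integral\<^sup>L M (q i)"
    for i
  proof -
    have "(G \<Omega> emb p \<epsilon> (u + X i *\<^sub>R v) - G \<Omega> emb p \<epsilon> (u + 0 *\<^sub>R v)) / X i
        = (integral\<^sup>L M (\<lambda>x. h (emb u x + X i * emb v x)) - integral\<^sup>L M (\<lambda>x. h (emb u x + 0 * emb v x))) / X i"
      by (simp only: G_line)
    also have "\<dots> = integral\<^sup>L M (q i)"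
      using integrable_h[of "X i"] integrable_h[of 0]
      by (simp add: q_def[abs_def] Bochner_Integration.integral_diff)
    finally show ?thesis .
  qed
  have "(\<lambda>i. integral\<^sup>L M (q i)) \<longlonglongrightarrow> dG p \<epsilon> u v"
    unfolding dG_def
  proof (rule integral_dominated_convergence[where w="\<lambda>x. p * \<epsilon> powr (p - 1) * \<bar>emb v x\<bar>"])
    show "q i \<in> borel_measurable M" for i
      unfolding q_def h_def by measurable
    show "AE x in M. (\<lambda>i. q i x) \<longlonglongrightarrow> 2 * emb u x * psi' p \<epsilon> ((emb u x)\<^sup>2) * emb v x"
      using psi_sq_line_has_real_derivative[OF \<epsilon>] X
      by (simp add: has_real_derivative_at_0_iff_sequentially q_def h_def)
    show "AE x in M. norm (q i x) \<le> p * \<epsilon> powr (p - 1) * \<bar>emb v x\<bar>" for i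
    proof (intro AE_I2)
      fix x
      have "\<bar>h (emb u x + X i * emb v x) - h (emb u x)\<bar> \<le> \<bar>X i\<bar> * (p * \<epsilon> powr (p - 1) * \<bar>emb v x\<bar>)"
        using psi_sq_lipschitz[OF p \<epsilon>, of "emb u x + X i * emb v x" "emb u x"]
        by (simp add: h_def abs_mult mult_ac)
      then show "norm (q i x) \<le> p * \<epsilon> powr (p - 1) * \<bar>emb v x\<bar>"
        using X(1) by (simp add: q_def divide_le_eq mult.commute)
    qed
  qed simp_all
  then show "(\<lambda>i. (G \<Omega> emb p \<epsilon> (u + X i *\<^sub>R v) - G \<Omega> emb p \<epsilon> (u + 0 *\<^sub>R v)) / X i) \<longlonglongrightarrow> dG p \<epsilon> u v"
    by (simp only: quotient)
qed

end

locale regularized_problem = L2_embedding \<Omega> emb C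
  for \<Omega> :: "'a::euclidean_space set" and emb :: "'v::{real_inner,complete_space} \<Rightarrow> 'a \<Rightarrow> real"
    and C :: real +
  fixes F :: "'v \<Rightarrow> real" and DF :: "'v \<Rightarrow> ('v \<Rightarrow>\<^sub>L real)"
    and \<alpha> \<beta> p \<rho> :: real and ubar :: 'v and \<epsilon> :: "nat \<Rightarrow> real" and u :: "nat \<Rightarrow> 'v"
  assumes F_wlsc: "weakly_lsc F" and F_C1: "C1_frechet F DF"
    and \<alpha>: "\<alpha> > 0" and \<beta>: "\<beta> > 0" and p: "0 < p" "p < 1" and \<rho>: "\<rho> > 0"
    and local_min: "norm (v - ubar) \<le> \<rho> \<Longrightarrow> Phi \<Omega> emb F \<alpha> \<beta> p 0 ubar \<le> Phi \<Omega> emb F \<alpha> \<beta> p 0 v"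
    and \<epsilon>_pos: "\<epsilon> k > 0" and \<epsilon>_lim: "\<epsilon> \<longlonglongrightarrow> 0"
    and u_feasible: "norm (u k - ubar) \<le> \<rho>"
    and u_optimal: "norm (v - ubar) \<le> \<rho> \<Longrightarrow>
      Phi \<Omega> emb F \<alpha> \<beta> p (\<epsilon> k) (u k) + 1/2 * (L2_norm \<Omega> (\<lambda>x. emb (u k) x - emb ubar x))\<^sup>2
      \<le> Phi \<Omega> emb F \<alpha> \<beta> p (\<epsilon> k) v + 1/2 * (L2_norm \<Omega> (\<lambda>x. emb v x - emb ubar x))\<^sup>2"
begin

lemma energy_comparison:
  "F (u k) + \<alpha>/2 * (norm (u k))\<^sup>2 + \<beta> * G \<Omega> emb p (\<epsilon> k) (u k) + 1/2 * L2_sq (u k - ubar)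
    \<le> F ubar + \<alpha>/2 * (norm ubar)\<^sup>2 + \<beta> * G \<Omega> emb p (\<epsilon> k) ubar"
  using u_optimal[of ubar k] \<rho> L2_norm_diff_sq[of "u k" ubar] L2_norm_diff_sq[of ubar ubar]
  by (simp add: Phi_def L2_sq_def emb_zero)

lemma L2_sq_distance_le: "L2_sq (u k - ubar) \<le> 2 * (\<beta> * ((1 - p/2) * \<epsilon> k powr p * \<mu>))"
proof -
  have "F ubar + \<alpha>/2 * (norm ubar)\<^sup>2 + \<beta> * G \<Omega> emb p 0 ubar
      \<le> F (u k) + \<alpha>/2 * (norm (u k))\<^sup>2 + \<beta> * G \<Omega> emb p 0 (u k)"
    using local_min[OF u_feasible[of k]] by (simp add: Phi_def)
  moreover have "\<beta> * G \<Omega> emb p 0 (u k) \<le> \<beta> * G \<Omega> emb p (\<epsilon> k) (u k)"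
    using G_zero_le_G[OF p \<epsilon>_pos] \<beta> by simp
  moreover have "\<beta> * G \<Omega> emb p (\<epsilon> k) ubar \<le> \<beta> * (G \<Omega> emb p 0 ubar + (1 - p/2) * \<epsilon> k powr p * \<mu>)"
    using G_le_G_zero_add[OF p \<epsilon>_pos] \<beta> by simp
  ultimately show ?thesis
    using energy_comparison[of k] by (simp add: distrib_left)
qed

lemma \<epsilon>_powr_tendsto_0: "(\<lambda>k. \<epsilon> k powr p) \<longlonglongrightarrow> 0"
  using \<epsilon>_pos p
  by (intro tendsto_zero_powrI[OF \<epsilon>_lim tendsto_const]) (auto intro: always_eventually less_imp_le)

lemma L2_sq_distance_tendsto_0: "(\<lambda>k. L2_sq (u k - ubar)) \<longlonglongrightarrow> 0"
proof (rule tendsto_sandwich[OF _ _ tendsto_const])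
  have "(\<lambda>k. 2 * (\<beta> * ((1 - p/2) * \<epsilon> k powr p * \<mu>))) \<longlonglongrightarrow> 2 * (\<beta> * ((1 - p/2) * 0 * \<mu>))"
    by (intro tendsto_intros \<epsilon>_powr_tendsto_0)
  then show "(\<lambda>k. 2 * (\<beta> * ((1 - p/2) * \<epsilon> k powr p * \<mu>))) \<longlonglongrightarrow> 0" by simp
qed (simp_all add: L2_sq_nonneg L2_sq_distance_le)

lemma weak_convergence: "(\<lambda>k. inner (u k) z) \<longlonglongrightarrow> inner ubar z"
proof -
  have "(\<lambda>k. inner (u k - ubar) z) \<longlonglongrightarrow> 0"
    using u_feasible L2_sq_distance_tendsto_0 by (rule L2_sq.null_imp_weakly_null)
  then show ?thesis by (simp add: inner_diff_left LIM_zero_iff)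
qed

lemma energy_limsup:
  assumes "r > 0"
  shows "eventually (\<lambda>k. F (u k) + \<alpha>/2 * (norm (u k))\<^sup>2 < F ubar + \<alpha>/2 * (norm ubar)\<^sup>2 + r) sequentially"
proof -
  define s where "s k = \<beta> * integral\<^sup>L M (\<lambda>x. \<bar>emb (ubar - u k) x\<bar> powr p)
    + \<beta> * ((1 - p/2) * \<epsilon> k powr p * \<mu>)" for k
  have energy_le: "F (u k) + \<alpha>/2 * (norm (u k))\<^sup>2 \<le> F ubar + \<alpha>/2 * (norm ubar)\<^sup>2 + s k" for k
  proof -
    have "\<beta> * G \<Omega> emb p 0 ubar \<le> \<beta> * G \<Omega> emb p 0 (u k) + \<beta> * integral\<^sup>L M (\<lambda>x. \<bar>emb (ubar - u k) x\<bar> powr p)"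
      using mult_left_mono[OF G_zero_diff_le[OF p, of ubar "u k"], of \<beta>] \<beta>
      by (simp add: right_diff_distrib)
    moreover have "\<beta> * G \<Omega> emb p 0 (u k) \<le> \<beta> * G \<Omega> emb p (\<epsilon> k) (u k)"
      using G_zero_le_G[OF p \<epsilon>_pos] \<beta> by simp
    moreover have "\<beta> * G \<Omega> emb p (\<epsilon> k) ubar \<le> \<beta> * (G \<Omega> emb p 0 ubar + (1 - p/2) * \<epsilon> k powr p * \<mu>)"
      using G_le_G_zero_add[OF p \<epsilon>_pos] \<beta> by simp
    ultimately show ?thesis
      using energy_comparison[of k] L2_sq_nonneg[of "u k - ubar"] by (simp add: s_def distrib_left)
  qed
  have "s \<longlonglongrightarrow> \<beta> * 0 + \<beta> * ((1 - p/2) * 0 * \<mu>)"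
  proof -
    have "L2_sq (ubar - u k) = L2_sq (u k - ubar)" for k
      using L2_sq_scaleR[of "-1" "u k - ubar"] by simp
    then have "(\<lambda>k. integral\<^sup>L M (\<lambda>x. \<bar>emb (ubar - u k) x\<bar> powr p)) \<longlonglongrightarrow> 0"
      using integral_abs_powr_tendsto_0[OF p, of "\<lambda>k. ubar - u k"] L2_sq_distance_tendsto_0 by simp
    then show ?thesis unfolding s_def by (intro tendsto_intros \<epsilon>_powr_tendsto_0)
  qed
  then have "eventually (\<lambda>k. s k < r) sequentially"
    using assms by (intro order_tendstoD) simp_all
  then show ?thesis
  proof eventually_elim
    case (elim k)
    then show ?case using energy_le[of k] by linarith
  qed
qed

lemma strong_convergence: "u \<longlonglongrightarrow> ubar"
proof (rule weak_tendsto_and_norm_limsup_imp_tendsto[OF weak_convergence])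
  fix r :: real
  assume r: "r > 0"
  have "ereal (F ubar - \<alpha> * r / 4) < ereal (F ubar)"
    using \<alpha> r by simp
  also have "ereal (F ubar) \<le> liminf (\<lambda>k. ereal (F (u k)))"
    using F_wlsc weak_convergence by (auto simp: weakly_lsc_def)
  finally have "ereal (F ubar - \<alpha> * r / 4) < liminf (\<lambda>k. ereal (F (u k)))" .
  from less_LiminfD[OF this]
  have "eventually (\<lambda>k. F ubar - \<alpha> * r / 4 < F (u k)) sequentially" by simp
  moreover have "eventually (\<lambda>k. F (u k) + \<alpha>/2 * (norm (u k))\<^sup>2
      < F ubar + \<alpha>/2 * (norm ubar)\<^sup>2 + \<alpha> * r / 4) sequentially"
    using \<alpha> r by (intro energy_limsup) simp
  ultimately show "eventually (\<lambda>k. (norm (u k))\<^sup>2 < (norm ubar)\<^sup>2 + r) sequentially"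
  proof eventually_elim
    case (elim k)
    then have "\<alpha> * (norm (u k))\<^sup>2 < \<alpha> * ((norm ubar)\<^sup>2 + r)" by (simp add: algebra_simps)
    then show ?case using \<alpha> by simp
  qed
qed

lemma has_real_derivative_penalized_objective:
  assumes e: "e > 0"
  shows "((\<lambda>t. Phi \<Omega> emb F \<alpha> \<beta> p e (w + t *\<^sub>R v)
      + 1/2 * (L2_norm \<Omega> (\<lambda>x. emb (w + t *\<^sub>R v) x - emb ubar x))\<^sup>2)
    has_real_derivative blinfun_apply (DF w) v + \<alpha> * inner w v + \<beta> * dG p e w v + L2_inner (w - ubar) v)
    (at 0)"
proof -
  have "(\<lambda>t. Phi \<Omega> emb F \<alpha> \<beta> p e (w + t *\<^sub>R v)
      + 1/2 * (L2_norm \<Omega> (\<lambda>x. emb (w + t *\<^sub>R v) x - emb ubar x))\<^sup>2)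
    = (\<lambda>t. F (w + t *\<^sub>R v) + \<alpha>/2 * ((norm w)\<^sup>2 + 2 * t * inner w v + t\<^sup>2 * (norm v)\<^sup>2)
      + \<beta> * G \<Omega> emb p e (w + t *\<^sub>R v)
      + 1/2 * (L2_sq (w - ubar) + 2 * t * L2_inner (w - ubar) v + t\<^sup>2 * L2_sq v))"
  proof (rule ext)
    fix t
    have "w + t *\<^sub>R v - ubar = (w - ubar) + t *\<^sub>R v" by simp
    then have "(L2_norm \<Omega> (\<lambda>x. emb (w + t *\<^sub>R v) x - emb ubar x))\<^sup>2
        = L2_sq (w - ubar) + 2 * t * L2_inner (w - ubar) v + t\<^sup>2 * L2_sq v"
      by (simp only: L2_norm_diff_sq L2_sq_add_scaleR)
    then show "Phi \<Omega> emb F \<alpha> \<beta> p e (w + t *\<^sub>R v)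
        + 1/2 * (L2_norm \<Omega> (\<lambda>x. emb (w + t *\<^sub>R v) x - emb ubar x))\<^sup>2
      = F (w + t *\<^sub>R v) + \<alpha>/2 * ((norm w)\<^sup>2 + 2 * t * inner w v + t\<^sup>2 * (norm v)\<^sup>2)
        + \<beta> * G \<Omega> emb p e (w + t *\<^sub>R v)
        + 1/2 * (L2_sq (w - ubar) + 2 * t * L2_inner (w - ubar) v + t\<^sup>2 * L2_sq v)"
      by (simp only: Phi_def power2_norm_add_scaleR)
  qed
  moreover have "(F has_derivative blinfun_apply (DF w)) (at w)"
    using F_C1 by (simp add: C1_frechet_def)
  ultimately have "((\<lambda>t. Phi \<Omega> emb F \<alpha> \<beta> p e (w + t *\<^sub>R v)
      + 1/2 * (L2_norm \<Omega> (\<lambda>x. emb (w + t *\<^sub>R v) x - emb ubar x))\<^sup>2)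
    has_real_derivative blinfun_apply (DF w) v + \<alpha>/2 * (2 * inner w v) + \<beta> * dG p e w v
      + 1/2 * (2 * L2_inner (w - ubar) v)) (at 0)"
    by (simp only:) (intro DERIV_add DERIV_cmult has_real_derivative_along_line
        has_real_derivative_G[OF p e] quadratic_has_real_derivative_at_0)
  then show ?thesis by simp
qed

lemma first_order_condition:
  assumes interior: "norm (u k - ubar) < \<rho>"
  shows "blinfun_apply (DF (u k)) v + \<alpha> * inner (u k) v + \<beta> * dG p (\<epsilon> k) (u k) v
    + L2_inner (u k - ubar) v = 0"
proof (rule DERIV_local_min[OF has_real_derivative_penalized_objective[OF \<epsilon>_pos]])
  define \<delta> where "\<delta> = (\<rho> - norm (u k - ubar)) / (norm v + 1)"
  show "\<delta> > 0" unfolding \<delta>_def using interior by (simp add: add_nonneg_pos)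
  show "\<forall>t. \<bar>0 - t\<bar> < \<delta> \<longrightarrow>
      Phi \<Omega> emb F \<alpha> \<beta> p (\<epsilon> k) (u k + 0 *\<^sub>R v) + 1/2 * (L2_norm \<Omega> (\<lambda>x. emb (u k + 0 *\<^sub>R v) x - emb ubar x))\<^sup>2
      \<le> Phi \<Omega> emb F \<alpha> \<beta> p (\<epsilon> k) (u k + t *\<^sub>R v) + 1/2 * (L2_norm \<Omega> (\<lambda>x. emb (u k + t *\<^sub>R v) x - emb ubar x))\<^sup>2"
  proof (intro allI impI)
    fix t :: real
    assume "\<bar>0 - t\<bar> < \<delta>"
    then have "\<bar>t\<bar> * norm v \<le> \<delta> * (norm v + 1)"
      using \<open>\<delta> > 0\<close> by (intro mult_mono) auto
    moreover have "norm v + 1 \<noteq> 0" by (smt (verit) norm_ge_zero)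
    ultimately have "norm (u k - ubar) + \<bar>t\<bar> * norm v \<le> \<rho>"
      by (simp add: \<delta>_def)
    moreover have "norm (u k + t *\<^sub>R v - ubar) \<le> norm (u k - ubar) + \<bar>t\<bar> * norm v"
      using norm_triangle_ineq[of "u k - ubar" "t *\<^sub>R v"] by (simp add: algebra_simps)
    ultimately show "Phi \<Omega> emb F \<alpha> \<beta> p (\<epsilon> k) (u k + 0 *\<^sub>R v)
        + 1/2 * (L2_norm \<Omega> (\<lambda>x. emb (u k + 0 *\<^sub>R v) x - emb ubar x))\<^sup>2
      \<le> Phi \<Omega> emb F \<alpha> \<beta> p (\<epsilon> k) (u k + t *\<^sub>R v)
        + 1/2 * (L2_norm \<Omega> (\<lambda>x. emb (u k + t *\<^sub>R v) x - emb ubar x))\<^sup>2"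
      using u_optimal by simp
  qed
qed

definition multiplier :: "nat \<Rightarrow> ('v \<Rightarrow>\<^sub>L real)" where
  "multiplier k = Blinfun (dG p (\<epsilon> k) (u k))"

definition limit_multiplier :: "'v \<Rightarrow>\<^sub>L real" where
  "limit_multiplier = (- 1 / \<beta>) *\<^sub>R (DF ubar + \<alpha> *\<^sub>R blinfun_inner_left ubar)"

lemma multiplier_apply: "blinfun_apply (multiplier k) v = dG p (\<epsilon> k) (u k) v"
  unfolding multiplier_def using bounded_linear_dG[OF p \<epsilon>_pos] by (simp add: bounded_linear_Blinfun_apply)

lemma limit_multiplier_apply:
  "\<beta> * blinfun_apply limit_multiplier v = - blinfun_apply (DF ubar) v - \<alpha> * inner ubar v"
proof -
  have "blinfun_apply limit_multiplier v = - ((blinfun_apply (DF ubar) v + \<alpha> * inner ubar v) / \<beta>)"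
    by (simp add: limit_multiplier_def inner_commute blinfun.minus_left blinfun.scaleR_left
        blinfun.add_left)
  then show ?thesis using \<beta> by (simp add: field_simps)
qed

lemma norm_multiplier_diff_le:
  assumes "norm (u k - ubar) < \<rho>"
  shows "\<beta> * norm (multiplier k - limit_multiplier)
    \<le> norm (DF (u k) - DF ubar) + (\<alpha> + C\<^sup>2) * norm (u k - ubar)"
proof -
  have "\<beta> * \<bar>blinfun_apply (multiplier k - limit_multiplier) v\<bar>
      \<le> (norm (DF (u k) - DF ubar) + (\<alpha> + C\<^sup>2) * norm (u k - ubar)) * norm v" for v
  proof -
    have "\<beta> * blinfun_apply (multiplier k - limit_multiplier) v
        = - blinfun_apply (DF (u k) - DF ubar) v - \<alpha> * inner (u k - ubar) v - L2_inner (u k - ubar) v"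
      using first_order_condition[OF assms, of v] limit_multiplier_apply[of v]
      by (simp add: multiplier_apply inner_diff_left blinfun.diff_left algebra_simps)
    moreover have "\<bar>blinfun_apply (DF (u k) - DF ubar) v\<bar> \<le> norm (DF (u k) - DF ubar) * norm v"
      using norm_blinfun[of "DF (u k) - DF ubar" v] by simp
    moreover have "\<bar>\<alpha> * inner (u k - ubar) v\<bar> \<le> \<alpha> * (norm (u k - ubar) * norm v)"
      using Cauchy_Schwarz_ineq2[of "u k - ubar" v] \<alpha> by (simp add: abs_mult)
    moreover note abs_L2_inner_le[of "u k - ubar" v]
    ultimately have "\<bar>\<beta> * blinfun_apply (multiplier k - limit_multiplier) v\<bar>
        \<le> norm (DF (u k) - DF ubar) * norm v + \<alpha> * (norm (u k - ubar) * norm v)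
          + C\<^sup>2 * norm (u k - ubar) * norm v"
      by linarith
    then show ?thesis using \<beta> by (simp add: abs_mult ring_distribs mult_ac)
  qed
  then have "norm (multiplier k - limit_multiplier)
      \<le> (norm (DF (u k) - DF ubar) + (\<alpha> + C\<^sup>2) * norm (u k - ubar)) / \<beta>"
    using \<alpha> \<beta> by (intro norm_blinfun_bound) (auto simp: field_simps)
  then show ?thesis using \<beta> by (simp add: field_simps)
qed

lemma multiplier_tendsto: "multiplier \<longlonglongrightarrow> limit_multiplier"
proof -
  define g where "g k = (norm (DF (u k) - DF ubar) + (\<alpha> + C\<^sup>2) * norm (u k - ubar)) / \<beta>" for k
  have "continuous_on UNIV DF" using F_C1 by (simp add: C1_frechet_def)
  then have "(\<lambda>k. DF (u k)) \<longlonglongrightarrow> DF ubar"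
    using strong_convergence by (rule continuous_on_tendsto_compose) simp_all
  then have "(\<lambda>k. norm (DF (u k) - DF ubar)) \<longlonglongrightarrow> 0"
    by (intro tendsto_norm_zero LIM_zero)
  moreover have dist_lim: "(\<lambda>k. norm (u k - ubar)) \<longlonglongrightarrow> 0"
    using strong_convergence by (intro tendsto_norm_zero LIM_zero)
  ultimately have "(\<lambda>k. norm (DF (u k) - DF ubar) + (\<alpha> + C\<^sup>2) * norm (u k - ubar)) \<longlonglongrightarrow> 0 + (\<alpha> + C\<^sup>2) * 0"
    by (intro tendsto_add tendsto_mult_left)
  then have g_lim: "g \<longlonglongrightarrow> 0"
    unfolding g_def by (intro tendsto_divide_zero) simp
  have "eventually (\<lambda>k. norm (u k - ubar) < \<rho>) sequentially"
    using dist_lim \<rho> by (rule order_tendstoD(2))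
  then have "eventually (\<lambda>k. norm (multiplier k - limit_multiplier) \<le> g k) sequentially"
  proof eventually_elim
    case (elim k)
    then have "\<beta> * norm (multiplier k - limit_multiplier) \<le> \<beta> * g k"
      using norm_multiplier_diff_le[of k] \<beta> by (simp add: g_def)
    then show ?case using \<beta> by simp
  qed
  then have "(\<lambda>k. multiplier k - limit_multiplier) \<longlonglongrightarrow> 0"
    using g_lim by (rule Lim_null_comparison)
  then show ?thesis by (rule LIM_zero_cancel)
qed

end

theorem lemma5p3:
  fixes \<Omega> :: "'a::euclidean_space set"
    and emb :: "'v::{real_inner,complete_space} \<Rightarrow> 'a \<Rightarrow> real"
    and F :: "'v \<Rightarrow> real" and DF :: "'v \<Rightarrow> ('v \<Rightarrow>\<^sub>L real)"
    and \<alpha> \<beta> p \<rho> :: real and ubar :: 'v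
    and \<epsilon> :: "nat \<Rightarrow> real" and u :: "nat \<Rightarrow> 'v"
  assumes dom: "lipschitz_domain \<Omega>"
    and emb: "compact_dense_embedding \<Omega> emb"
    and F_wlsc: "weakly_lsc F" and F_below: "bounded_below_affine F"
    and F_C1: "C1_frechet F DF"
    and \<alpha>: "\<alpha> > 0" and \<beta>: "\<beta> > 0" and p: "0 < p" "p < 1"
    and \<rho>: "\<rho> > 0"
    and loc: "\<forall>v. norm (v - ubar) \<le> \<rho> \<longrightarrow> Phi \<Omega> emb F \<alpha> \<beta> p 0 ubar \<le> Phi \<Omega> emb F \<alpha> \<beta> p 0 v"
    and eps_pos: "\<forall>k. \<epsilon> k > 0" and eps_lim: "\<epsilon> \<longlonglongrightarrow> 0"
    and u_feas: "\<forall>k. norm (u k - ubar) \<le> \<rho>"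
    and u_opt: "\<forall>k v. norm (v - ubar) \<le> \<rho> \<longrightarrow>
        Phi \<Omega> emb F \<alpha> \<beta> p (\<epsilon> k) (u k) + 1/2 * (L2_norm \<Omega> (\<lambda>x. emb (u k) x - emb ubar x))\<^sup>2
        \<le> Phi \<Omega> emb F \<alpha> \<beta> p (\<epsilon> k) v + 1/2 * (L2_norm \<Omega> (\<lambda>x. emb v x - emb ubar x))\<^sup>2"
  shows "\<exists>(Lam :: nat \<Rightarrow> ('v \<Rightarrow>\<^sub>L real)) Lbar.
           (\<forall>k v. blinfun_apply (Lam k) v =
              integral\<^sup>L (lebesgue_on \<Omega>)
                (\<lambda>x. 2 * emb (u k) x * psi' p (\<epsilon> k) ((emb (u k) x)\<^sup>2) * emb v x)) \<and>
           (\<forall>v. \<beta> * blinfun_apply Lbar v = - blinfun_apply (DF ubar) v - \<alpha> * inner ubar v) \<and>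
           Lam \<longlonglongrightarrow> Lbar"
proof -
  obtain C where "L2_embedding \<Omega> emb C"
    using L2_embedding_if_compact_dense_embedding[OF dom emb] .
  then interpret regularized_problem \<Omega> emb C F DF \<alpha> \<beta> p \<rho> ubar \<epsilon> u
    using assms by (simp add: regularized_problem_def regularized_problem_axioms_def)
  show ?thesis
    using multiplier_apply limit_multiplier_apply multiplier_tendsto
    by (intro exI[of _ multiplier] exI[of _ limit_multiplier]) (simp add: dG_def)
qed

end
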